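(* Let $G=(V=V_0\uplus V_1,v_{\mathsf{init}},E,\gamma)$ be a quantitative graph game with rational discount factor $d=\frac pq>1$, and let $\mu>0$ be the maximum of the absolute values of the costs along transitions. The number of iterations required by the value-iteration algorithm to compute the optimal cost $W$ is (1) $O(|V|)$ when $d\ge 2$; (2) $O\!\left(\frac{\log\mu}{d-1}+|V|\right)$ when $1<d<2$.
   Context: A quantitative graph game $G=(V=V_0\uplus V_1, v_{\mathsf{init}},E,\gamma)$ consists of a finite directed graph $(V,E)$ in which every state has at least one outgoing edge, a partition of $V$ into $V_0$ (maximizing player) and $V_1$ (minimizing player), an initial state, and an integer cost function $\gamma:E\to\mathbb{Z}$. The value-iteration algorithm computes, for $k=1,2,\dots$, the values $\mathit{wt}_1(v)=\max\{\gamma(v,w):(v,w)\in E\}$ if $v\in V_0$ ($\min$ if $v\in V_1$) and $\mathit{wt}_{k+1}(v)=\max\{\gamma(v,w)+\frac1d\mathit{wt}_k(w):(v,w)\in E\}$ if $v\in V_0$ ($\min$ if $v\in V_1$). The optimal cost is $W=\lim_{k\to\infty}\mathit{wt}_k(v_{\mathsf{init}})$; it lies in the interval $[\mathit{wt}_k(v_{\mathsf{init}})-\frac{\mu}{(d-1)d^{k-1}},\ \mathit{wt}_k(v_{\mathsf{init}})+\frac{\mu}{(d-1)d^{k-1}}]$ and is a rational number with denominator at most $(p^{|V|}-q^{|V|})p^{|V|}$. The number of iterations required is the number $k$ of iterations after which this interval has size at most $1/\big((p^{|V|}-q^{|V|})^2p^{2|V|}\big)$, so that $W$ is determined as the unique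 rational number with denominator at most $(p^{|V|}-q^{|V|})p^{|V|}$ in that interval. *)

theory Defs
  imports Complex_Main
begin

record 'v game =
  V0 :: "'v set"
  V1 :: "'v set"
  vinit :: 'v
  edges :: "('v \<times> 'v) set"
  cost :: "'v \<times> 'v \<Rightarrow> int"

definition vertices :: "'v game \<Rightarrow> 'v set" where
  "vertices G = V0 G \<union> V1 G"

definition valid_game :: "'v game \<Rightarrow> bool" where
  "valid_game G \<longleftrightarrow>
     finite (vertices G) \<and> V0 G \<inter> V1 G = {} \<and> vinit G \<in> vertices G \<and>
     edges G \<subseteq> vertices G \<times> vertices G \<and>
     (\<forall>v \<in> vertices G. \<exists>w. (v, w) \<in> edges G)"

definition game_mu :: "'v game \<Rightarrow> int" where
  "game_mu G = Max ((\<lambda>e. \<bar>cost G e\<bar>) ` edges G)"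

text \<open>Value iteration (for reference): wt k v is wt_{k+1}(v) in the paper's indexing.\<close>
fun wt :: "real \<Rightarrow> 'v game \<Rightarrow> nat \<Rightarrow> 'v \<Rightarrow> real" where
  "wt d G 0 v = (if v \<in> V0 G then Max ((\<lambda>w. real_of_int (cost G (v, w))) ` {w. (v, w) \<in> edges G})
                 else Min ((\<lambda>w. real_of_int (cost G (v, w))) ` {w. (v, w) \<in> edges G}))"
| "wt d G (Suc k) v = (if v \<in> V0 G
       then Max ((\<lambda>w. real_of_int (cost G (v, w)) + wt d G k w / d) ` {w. (v, w) \<in> edges G})
       else Min ((\<lambda>w. real_of_int (cost G (v, w)) + wt d G k w / d) ` {w. (v, w) \<in> edges G}))"

text \<open>Number of iterations required: the least k \<ge> 1 such that the interval
  [wt_k - mu/((d-1) d^(k-1)), wt_k + mu/((d-1) d^(k-1))] has size at most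
  1/((p^|V| - q^|V|)^2 p^(2|V|)), where d = p/q.\<close>
definition num_iterations :: "nat \<Rightarrow> nat \<Rightarrow> 'v game \<Rightarrow> nat" where
  "num_iterations p q G =
     (let d = real p / real q; n = card (vertices G); \<mu> = real_of_int (game_mu G) in
      LEAST k. 1 \<le> k \<and>
        2 * \<mu> / ((d - 1) * d ^ (k - 1))
          \<le> 1 / ((real p ^ n - real q ^ n)\<^sup>2 * real p ^ (2 * n)))"

end

theory Submission
  imports Defs
begin

text \<open>The precision threshold \<open>1/((p^|V| - q^|V|)^2 p^(2|V|))\<close> is at least \<open>p^(-4|V|)\<close>,
  while the width of the value-iteration interval decays like \<open>d^(-k)\<close>. Hence it suffices to take
  \<open>k \<approx> log\<^sub>d (2\<mu> p^(4|V|) / (d - 1)) = log\<^sub>d \<mu> + 4|V| log\<^sub>d p + O(1)\<close>.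
  For fixed \<open>d \<ge> 2\<close> and \<open>\<mu>\<close> this is \<open>O(|V|)\<close>; for \<open>1 < d < 2\<close> one uses
  \<open>log\<^sub>d \<mu> = ((d - 1) / ln d) \<cdot> ln \<mu> / (d - 1)\<close>.\<close>

lemma le_power_nat_ceiling_log:
  fixes b x :: real
  assumes "1 < b" "0 < x"
  shows "x \<le> b ^ nat \<lceil>log b x\<rceil>"
proof -
  have "x = b powr log b x" using assms by simp
  also have "\<dots> \<le> b powr real (nat \<lceil>log b x\<rceil>)"
    using assms(1) by (intro powr_mono) linarith+
  also have "\<dots> = b ^ nat \<lceil>log b x\<rceil>" using assms(1) by (simp add: powr_realpow)
  finally show ?thesis .
qed

lemma power_diff_square_mult_le:
  fixes x y :: real
  assumes "0 \<le> y" "y \<le> x"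
  shows "(x ^ n - y ^ n)\<^sup>2 * x ^ (2 * n) \<le> x ^ (4 * n)"
proof -
  have "0 \<le> x ^ n - y ^ n" "x ^ n - y ^ n \<le> x ^ n"
    using assms by (simp_all add: power_mono)
  then have "(x ^ n - y ^ n)\<^sup>2 \<le> (x ^ n)\<^sup>2" by (auto intro: power_mono)
  moreover have "x ^ (4 * n) = (x ^ n)\<^sup>2 * x ^ (2 * n)"
    by (simp flip: power_mult power_add)
  ultimately show ?thesis using assms by (simp add: mult_right_mono)
qed

lemma card_vertices_pos: "valid_game G \<Longrightarrow> 0 < card (vertices G)"
  unfolding valid_game_def by (auto simp: card_gt_0_iff)

lemma num_iterations_le:
  assumes "1 \<le> k"
    and "2 * real_of_int (game_mu G) / ((real p / real q - 1) * (real p / real q) ^ (k - 1))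
      \<le> 1 / ((real p ^ card (vertices G) - real q ^ card (vertices G))\<^sup>2
              * real p ^ (2 * card (vertices G)))"
  shows "num_iterations p q G \<le> k"
  unfolding num_iterations_def Let_def using assms by (intro Least_le) simp

lemma num_iterations_le_log:
  fixes G :: "'v game"
  assumes "0 < q" "q < p" "valid_game G" "0 < game_mu G"
  defines "d \<equiv> real p / real q" and "n \<equiv> card (vertices G)"
    and "\<mu> \<equiv> real_of_int (game_mu G)"
  shows "num_iterations p q G \<le> Suc (nat \<lceil>log d (2 * \<mu> * real p ^ (4 * n) / (d - 1))\<rceil>)"
proof -
  define M where "M = 2 * \<mu> * real p ^ (4 * n) / (d - 1)"
  define k where "k = nat \<lceil>log d M\<rceil>"
  define X where "X = (real p ^ n - real q ^ n)\<^sup>2 * real p ^ (2 * n)"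
  have d: "1 < d" using assms(1,2) by (simp add: d_def)
  have \<mu>: "0 < \<mu>" using assms(4) by (simp add: \<mu>_def)
  have "0 < n" using card_vertices_pos[OF assms(3)] by (simp add: n_def)
  then have "real q ^ n < real p ^ n" using assms(2) by (simp add: power_strict_mono)
  then have X: "0 < X" using assms(2) by (simp add: X_def)
  have "2 * \<mu> * X \<le> 2 * \<mu> * real p ^ (4 * n)"
    using \<mu> power_diff_square_mult_le[of "real q" "real p" n] assms(2) by (simp add: X_def)
  also have "\<dots> = (d - 1) * M" using d by (simp add: M_def)
  also have "\<dots> \<le> (d - 1) * d ^ k"
    using d \<mu> assms(2) le_power_nat_ceiling_log[OF d, of M]
    by (intro mult_left_mono) (simp_all add: M_def k_def)
  finally have "2 * \<mu> / ((d - 1) * d ^ k) \<le> 1 / X"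
    using d X by (simp add: divide_le_eq le_divide_eq mult.commute)
  then have "num_iterations p q G \<le> Suc k"
    by (intro num_iterations_le) (simp_all add: d_def n_def \<mu>_def X_def)
  then show ?thesis by (simp add: k_def M_def)
qed

lemma num_iterations_le_affine:
  fixes G :: "'v game"
  assumes "0 < q" "q < p" "valid_game G" "0 < game_mu G"
  defines "d \<equiv> real p / real q"
  shows "real (num_iterations p q G) \<le> 2 + \<bar>log d (2 / (d - 1))\<bar>
      + log d (real_of_int (game_mu G)) + 4 * log d (real p) * real (card (vertices G))"
proof -
  define n where "n = card (vertices G)"
  define \<mu> where "\<mu> = real_of_int (game_mu G)"
  have d: "1 < d" using assms(1,2) by (simp add: d_def)
  have \<mu>: "1 \<le> \<mu>" using assms(4) by (simp add: \<mu>_def)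
  have p: "1 < real p" using assms(1,2) by simp
  define L where "L = log d (2 * \<mu> * real p ^ (4 * n) / (d - 1))"
  have "L = log d (2 / (d - 1)) + log d \<mu> + 4 * log d (real p) * real n"
    using d \<mu> p by (simp add: L_def log_mult_pos log_nat_power log_divide)
  moreover have "0 \<le> log d \<mu>" "0 \<le> 4 * log d (real p) * real n" using d \<mu> p by simp_all
  moreover have "real (nat \<lceil>L\<rceil>) \<le> max 0 L + 1" by linarith
  moreover have "real (num_iterations p q G) \<le> 1 + real (nat \<lceil>L\<rceil>)"
    using num_iterations_le_log[OF assms(1-4)] by (simp add: L_def d_def n_def \<mu>_def)
  ultimately show ?thesis unfolding n_def \<mu>_def by linarith
qed

lemma affine_le_linear:
  fixes a b n :: real
  assumes "0 \<le> a" "1 \<le> n"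
  shows "a + b * n \<le> (a + b) * n"
  using assms mult_left_mono[of 1 n a] by (simp add: algebra_simps)

theorem theorem1:
  fixes p q :: nat
  assumes "0 < q" and "q < p"
  shows
    "(real p / real q \<ge> 2 \<longrightarrow>
       (\<forall>\<mu>::int. 0 < \<mu> \<longrightarrow>
          (\<exists>C::real. \<forall>G :: 'v game. valid_game G \<longrightarrow> game_mu G = \<mu> \<longrightarrow>
             real (num_iterations p q G) \<le> C * real (card (vertices G)))))
   \<and> (real p / real q < 2 \<longrightarrow>
       (\<exists>C::real. \<forall>G :: 'v game. valid_game G \<longrightarrow> 0 < game_mu G \<longrightarrow>
          real (num_iterations p q G)
            \<le> C * (ln (real_of_int (game_mu G)) / (real p / real q - 1)
                   + real (card (vertices G)))))"
proof -
  define d where "d = real p / real q"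
  define A where "A = 2 + \<bar>log d (2 / (d - 1))\<bar>"
  define B where "B = 4 * log d (real p)"
  have d: "1 < d" using assms by (simp add: d_def)
  have bound: "real (num_iterations p q G)
      \<le> (A + log d (real_of_int (game_mu G))) + B * real (card (vertices G))"
    if "valid_game G" "0 < game_mu G" for G :: "'v game"
    using num_iterations_le_affine[OF assms that] by (simp add: A_def B_def d_def)
  have n: "1 \<le> real (card (vertices G))" if "valid_game G" for G :: "'v game"
    using card_vertices_pos[OF that] by simp
  have "real (num_iterations p q G) \<le> (A + log d (real_of_int \<mu>) + B) * real (card (vertices G))"
    if "0 < \<mu>" "valid_game G" "game_mu G = \<mu>" for \<mu> and G :: "'v game"
    using bound[of G] affine_le_linear[of "A + log d (real_of_int \<mu>)" "real (card (vertices G))" B]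
      n[of G] d that by (simp add: A_def)
  moreover
  have "real (num_iterations p q G)
      \<le> max (A + B) ((d - 1) / ln d)
          * (ln (real_of_int (game_mu G)) / (d - 1) + real (card (vertices G)))"
    if "valid_game G" "0 < game_mu G" for G :: "'v game"
  proof -
    let ?C = "max (A + B) ((d - 1) / ln d)" and ?l = "ln (real_of_int (game_mu G)) / (d - 1)"
    have "log d (real_of_int (game_mu G)) = (d - 1) / ln d * ?l"
      using d by (simp add: log_def)
    also have "\<dots> \<le> ?C * ?l" using d that(2) by (intro mult_right_mono) simp_all
    finally have "real (num_iterations p q G) \<le> ?C * ?l + (A + B) * real (card (vertices G))"
      using bound[OF that] affine_le_linear[of A "real (card (vertices G))" B] n[OF that(1)]
      by (simp add: A_def)
    also have "\<dots> \<le> ?C * ?l + ?C * real (card (vertices G))" by (simp add: mult_right_mono)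
    finally show ?thesis by (simp add: distrib_left)
  qed
  ultimately show ?thesis unfolding d_def by blast
qed

end
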